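(* Let $S\ni h$ be a $2$-admissible polarized lattice of degree $h^2=8$, $\Delta$ a Weyl chamber for $\operatorname{rt}(S,h)$, $\bar P$ the corresponding closed fundamental polyhedron, and $\Gamma=\operatorname{Fn}_\Delta(S,h)$. Then the star $\operatorname{Star}(e)$ of $e$ is as follows: (1) if $e\in\Gamma$ is a line, $\operatorname{Star}(e)\cong\mathbf{A}_2\oplus a\mathbf{A}_1$ with $a\le3$, or $\operatorname{Star}(e)\cong a\mathbf{A}_1$ with $a\le8$; (2) if $e\in\Gamma$ is a line and $S\ni h$ is $3$-admissible, $\operatorname{Star}(e)\cong a\mathbf{A}_1$ with $a\le7$; (3) if $e\in\mathfrak{b}(\Delta)$ is an exceptional divisor, $\operatorname{Star}(e)\cong a\mathbf{A}_1$ with $a\le5$; (4) if $e\in\bar P$ is a $3$-isotropic vector, $\operatorname{Star}(e)\cong\mathbf{A}_2$ or $\operatorname{Star}(e)\cong a\mathbf{A}_1$ with $a\le9$.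
   Context: All lattices even; $(S,h)$ polarized: $S$ hyperbolic, $h^2>0$. $\operatorname{root}_n(S,h)=\{r: r^2=-2,\ r\cdot h=n\}$, $\operatorname{rt}(S,h)$ spanned by $\operatorname{root}_0(S,h)$. A Weyl chamber $\Delta$ has positive roots $P_\Delta$ and simple roots $\mathfrak{b}(\Delta)$ (exceptional divisors). $\bar P=\{v\in S\otimes\mathbb{R}: v^2\ge0,\ v\cdot h\ge0,\ v\cdot r\ge0 \text{ for } r\in P_\Delta \text{ and all roots } r \text{ with } r\cdot h>0\}$. The Fano graph $\Gamma=\operatorname{Fn}_\Delta(S,h)=\{l\in\operatorname{root}_1(S,h): l\cdot e\ge0\ \forall e\in\mathfrak{b}(\Delta)\}$ (elements: lines), with edges of multiplicity $l_1\cdot l_2$. $w$ is $m$-isotropic if $w^2=0$, $w\cdot h=m$; $2$-admissible: no $1$- or $2$-isotropic vector; $3$-admissible: in addition no $3$-isotropic vector. $\operatorname{Star}(e)=\{l\in\Gamma: l\cdot e=1\}$ as an induced subgraph of $\Gamma$. $a\mathbf{A}_1$ denotes the graph of $a$ isolated vertices, and $\mathbf{A}_2\oplus a\mathbf{A}_1$ the disjoint union of a single edge with $a$ isolated vertices. *)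

theory Defs
  imports "HOL-Analysis.Analysis"
begin

text \<open>An even lattice of rank CARD('n) is modelled as the standard lattice Z^n inside R^n
  together with an integral Gram matrix G. Real vectors model S tensor R.\<close>

definition bil :: "int^'n^'n \<Rightarrow> real^'n \<Rightarrow> real^'n \<Rightarrow> real" where
  "bil G x y = (\<Sum>i\<in>UNIV. \<Sum>j\<in>UNIV. x$i * real_of_int (G$i$j) * y$j)"

definition sq :: "int^'n^'n \<Rightarrow> real^'n \<Rightarrow> real" where
  "sq G x = bil G x x"

definition lat :: "(real^'n) set" where
  "lat = {v. \<forall>i. v$i \<in> \<int>}"

definition even_lattice :: "int^'n^'n \<Rightarrow> bool" where
  "even_lattice G \<longleftrightarrow> (\<forall>i j. G$i$j = G$j$i) \<and> (\<forall>i. even (G$i$i))"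

text \<open>Hyperbolic: nondegenerate of signature (1, rank-1), i.e. there is a positive vector
  and the orthogonal complement of every positive vector is negative definite.\<close>
definition hyperbolic :: "int^'n^'n \<Rightarrow> bool" where
  "hyperbolic G \<longleftrightarrow> (\<exists>v. sq G v > 0) \<and>
     (\<forall>u v. sq G u > 0 \<longrightarrow> bil G u v = 0 \<longrightarrow> v \<noteq> 0 \<longrightarrow> sq G v < 0)"

definition polarized :: "int^'n^'n \<Rightarrow> real^'n \<Rightarrow> bool" where
  "polarized G h \<longleftrightarrow> even_lattice G \<and> hyperbolic G \<and> h \<in> lat \<and> sq G h > 0"

definition isotropic :: "int^'n^'n \<Rightarrow> real^'n \<Rightarrow> int \<Rightarrow> real^'n \<Rightarrow> bool" where
  "isotropic G h m w \<longleftrightarrow> w \<in> lat \<and> sq G w = 0 \<and> bil G w h = of_int m"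

definition admissible2 :: "int^'n^'n \<Rightarrow> real^'n \<Rightarrow> bool" where
  "admissible2 G h \<longleftrightarrow> (\<nexists>w. isotropic G h 1 w) \<and> (\<nexists>w. isotropic G h 2 w)"

definition admissible3 :: "int^'n^'n \<Rightarrow> real^'n \<Rightarrow> bool" where
  "admissible3 G h \<longleftrightarrow> admissible2 G h \<and> (\<nexists>w. isotropic G h 3 w)"

definition roots :: "int^'n^'n \<Rightarrow> real^'n \<Rightarrow> int \<Rightarrow> (real^'n) set" where
  "roots G h n = {r \<in> lat. sq G r = -2 \<and> bil G r h = of_int n}"

text \<open>A Weyl chamber of rt(S,h) is determined by a vector xi (in S tensor R) not orthogonal
  to any root in root_0; the chamber is the one containing the projection of xi.\<close>
definition weyl_vector :: "int^'n^'n \<Rightarrow> real^'n \<Rightarrow> real^'n \<Rightarrow> bool" where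
  "weyl_vector G h \<xi> \<longleftrightarrow> (\<forall>r\<in>roots G h 0. bil G r \<xi> \<noteq> 0)"

definition pos_roots :: "int^'n^'n \<Rightarrow> real^'n \<Rightarrow> real^'n \<Rightarrow> (real^'n) set" where
  "pos_roots G h \<xi> = {r \<in> roots G h 0. bil G r \<xi> > 0}"

definition simple_roots :: "int^'n^'n \<Rightarrow> real^'n \<Rightarrow> real^'n \<Rightarrow> (real^'n) set" where
  "simple_roots G h \<xi> = {r \<in> pos_roots G h \<xi>.
      \<not> (\<exists>s\<in>pos_roots G h \<xi>. \<exists>t\<in>pos_roots G h \<xi>. r = s + t)}"

definition Pbar :: "int^'n^'n \<Rightarrow> real^'n \<Rightarrow> real^'n \<Rightarrow> (real^'n) set" where
  "Pbar G h \<xi> = {v. sq G v \<ge> 0 \<and> bil G v h \<ge> 0 \<and>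
      (\<forall>r\<in>pos_roots G h \<xi>. bil G v r \<ge> 0) \<and>
      (\<forall>r. r \<in> lat \<and> sq G r = -2 \<and> bil G r h > 0 \<longrightarrow> bil G v r \<ge> 0)}"

definition fano :: "int^'n^'n \<Rightarrow> real^'n \<Rightarrow> real^'n \<Rightarrow> (real^'n) set" where
  "fano G h \<xi> = {l \<in> roots G h 1. \<forall>e\<in>simple_roots G h \<xi>. bil G l e \<ge> 0}"

definition star :: "int^'n^'n \<Rightarrow> real^'n \<Rightarrow> real^'n \<Rightarrow> real^'n \<Rightarrow> (real^'n) set" where
  "star G h \<xi> e = {l \<in> fano G h \<xi>. bil G l e = 1}"

text \<open>Graphs with edge multiplicities: vertex set V and multiplicity w on distinct vertices.
  Isomorphism: bijection preserving multiplicities.\<close>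
definition graph_iso :: "'a set \<Rightarrow> ('a \<Rightarrow> 'a \<Rightarrow> real) \<Rightarrow> 'b set \<Rightarrow> ('b \<Rightarrow> 'b \<Rightarrow> real) \<Rightarrow> bool" where
  "graph_iso V w W w' \<longleftrightarrow> (\<exists>f. bij_betw f V W \<and>
      (\<forall>x\<in>V. \<forall>y\<in>V. x \<noteq> y \<longrightarrow> w x y = w' (f x) (f y)))"

text \<open>a A_1: a isolated vertices.\<close>
definition aA1_mult :: "nat \<Rightarrow> nat \<Rightarrow> real" where
  "aA1_mult i j = 0"

text \<open>A_2 + a A_1: vertices 0..a+1, single simple edge between 0 and 1.\<close>
definition A2aA1_mult :: "nat \<Rightarrow> nat \<Rightarrow> real" where
  "A2aA1_mult i j = (if {i, j} = {0, 1} then 1 else 0)"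

definition star_iso_aA1 :: "int^'n^'n \<Rightarrow> real^'n \<Rightarrow> real^'n \<Rightarrow> real^'n \<Rightarrow> nat \<Rightarrow> bool" where
  "star_iso_aA1 G h \<xi> e a \<longleftrightarrow> graph_iso (star G h \<xi> e) (bil G) {0..<a} aA1_mult"

definition star_iso_A2aA1 :: "int^'n^'n \<Rightarrow> real^'n \<Rightarrow> real^'n \<Rightarrow> real^'n \<Rightarrow> nat \<Rightarrow> bool" where
  "star_iso_A2aA1 G h \<xi> e a \<longleftrightarrow> graph_iso (star G h \<xi> e) (bil G) {0..<a+2} A2aA1_mult"

end

theory Submission
  imports Defs
begin

text \<open>By the Hodge index theorem, \<open>v\<^sup>2 h\<^sup>2 \<le> (v \<cdot> h)\<^sup>2\<close> for every real vector \<open>v\<close>.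
  Applied to \<open>t e + \<Sum>C\<close> for a set \<open>C\<close> of lines in the star of \<open>e\<close> and a suitable
  real \<open>t\<close>, it shows that two lines of the star meet with multiplicity 0 or 1, and it bounds
  the number of pairwise disjoint lines in the star. The remaining configurations are ruled out
  by integral combinations such as \<open>2 e + \<Sum>C - h\<close>: they are either isotropic vectors of
  degree 2 or 3, excluded by admissibility, or roots orthogonal to \<open>h\<close> on which two vectors
  of the dual of the Weyl chamber (lines, or \<open>e\<close> itself) would take opposite signs.\<close>

section \<open>The bilinear form and the lattice\<close>

lemma bil_add_left: "bil G (x + y) z = bil G x z + bil G y z"
  by (simp add: bil_def distrib_right sum.distrib)

lemma bil_add_right: "bil G z (x + y) = bil G z x + bil G z y"
  by (simp add: bil_def distrib_left sum.distrib)

lemma bil_scale_left: "bil G (c *\<^sub>R x) z = c * bil G x z"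
  by (simp add: bil_def sum_distrib_left mult.assoc)

lemma bil_scale_right: "bil G z (c *\<^sub>R x) = c * bil G z x"
  by (simp add: bil_def sum_distrib_left mult.assoc mult.left_commute)

lemma bil_minus_left: "bil G (- x) z = - bil G x z"
  by (simp add: bil_def sum_negf)

lemma bil_minus_right: "bil G z (- x) = - bil G z x"
  by (simp add: bil_def sum_negf)

lemma bil_diff_left: "bil G (x - y) z = bil G x z - bil G y z"
  by (simp add: bil_def left_diff_distrib sum_subtractf)

lemma bil_diff_right: "bil G z (x - y) = bil G z x - bil G z y"
  by (simp add: bil_def right_diff_distrib sum_subtractf)

lemma bil_zero_left [simp]: "bil G 0 z = 0"
  by (simp add: bil_def)

lemma bil_zero_right [simp]: "bil G z 0 = 0"
  by (simp add: bil_def)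

lemma bil_sum_left: "bil G (sum f A) z = (\<Sum>a\<in>A. bil G (f a) z)"
  by (induction A rule: infinite_finite_induct) (auto simp: bil_add_left)

lemma bil_sum_right: "bil G z (sum f A) = (\<Sum>a\<in>A. bil G z (f a))"
  by (induction A rule: infinite_finite_induct) (auto simp: bil_add_right)

lemmas bil_linear = bil_add_left bil_add_right bil_scale_left bil_scale_right
  bil_minus_left bil_minus_right bil_diff_left bil_diff_right

lemma bil_commute:
  assumes "even_lattice G"
  shows "bil G x y = bil G y x"
proof -
  have "bil G x y = (\<Sum>j\<in>UNIV. \<Sum>i\<in>UNIV. x$i * real_of_int (G$i$j) * y$j)"
    unfolding bil_def by (rule sum.swap)
  also have "\<dots> = bil G y x"
    using assms by (simp add: bil_def even_lattice_def mult.commute mult.left_commute)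
  finally show ?thesis .
qed

lemma bil_Ints: "x \<in> lat \<Longrightarrow> y \<in> lat \<Longrightarrow> bil G x y \<in> \<int>"
  unfolding bil_def lat_def by (auto intro!: Ints_sum Ints_mult)

lemma sq_zero [simp]: "sq G 0 = 0"
  by (simp add: sq_def)

lemma sq_scale: "sq G (c *\<^sub>R x) = c\<^sup>2 * sq G x"
  by (simp add: sq_def bil_scale_left bil_scale_right power2_eq_square)

lemma sq_minus: "sq G (- x) = sq G x"
  by (simp add: sq_def bil_minus_left bil_minus_right)

lemma sq_add:
  assumes "even_lattice G"
  shows "sq G (x + y) = sq G x + sq G y + 2 * bil G x y"
  using bil_commute[OF assms, of y x] by (simp add: sq_def bil_add_left bil_add_right)

lemma sq_sum_orthogonal:
  assumes "even_lattice G" and "finite C" and "\<forall>x\<in>C. \<forall>y\<in>C. x \<noteq> y \<longrightarrow> bil G x y = 0"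
  shows "sq G (\<Sum>C) = (\<Sum>x\<in>C. sq G x)"
  using assms(2,3)
proof (induction C rule: finite_induct)
  case (insert x C)
  then have "bil G x (\<Sum>C) = 0"
    by (auto simp: bil_sum_right intro!: sum.neutral)
  with insert show ?case by (simp add: sq_add[OF assms(1)])
qed (simp add: sq_def)

lemma sq_sum_union_orthogonal:
  assumes "even_lattice G" and "finite A" "finite B" "A \<inter> B = {}"
    and "\<forall>a\<in>A. \<forall>b\<in>B. bil G a b = 0"
  shows "sq G (\<Sum>(A \<union> B)) = sq G (\<Sum>A) + sq G (\<Sum>B)"
  using assms by (simp add: sum.union_disjoint sq_add bil_sum_left bil_sum_right)

lemma bil_sum_orthogonal_member:
  assumes "finite C" "x \<in> C" "\<forall>y\<in>C. y \<noteq> x \<longrightarrow> bil G x y = 0"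
  shows "bil G x (\<Sum>C) = sq G x"
proof -
  have "bil G x (\<Sum>C) = (\<Sum>y\<in>C. if y = x then sq G x else 0)"
    using assms(3) by (auto simp: bil_sum_right sq_def intro: sum.cong)
  also have "\<dots> = sq G x"
    using assms(1,2) by simp
  finally show ?thesis .
qed

lemma lat_add: "x \<in> lat \<Longrightarrow> y \<in> lat \<Longrightarrow> x + y \<in> lat"
  by (auto simp: lat_def)

lemma lat_scale: "c \<in> \<int> \<Longrightarrow> x \<in> lat \<Longrightarrow> c *\<^sub>R x \<in> lat"
  by (auto simp: lat_def)

lemma lat_sum: "(\<And>a. a \<in> A \<Longrightarrow> f a \<in> lat) \<Longrightarrow> sum f A \<in> lat"
  by (induction A rule: infinite_finite_induct) (auto simp: lat_def)

lemma finite_lat_bounded: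
  assumes "bounded S"
  shows "finite (lat \<inter> S)"
proof -
  obtain R where R: "\<And>v. v \<in> S \<Longrightarrow> norm v \<le> R"
    using assms bounded_iff by blast
  define N where "N = \<lceil>R\<rceil>"
  let ?vec = "\<lambda>f. \<chi> i. real_of_int (f i) :: real^'a"
  have "lat \<inter> S \<subseteq> ?vec ` (UNIV \<rightarrow>\<^sub>E {-N..N})"
  proof
    fix v :: "real^'a" assume v: "v \<in> lat \<inter> S"
    have "v$i = of_int \<lfloor>v$i\<rfloor>" for i
      using v by (auto simp: lat_def elim!: Ints_cases)
    then have "v = ?vec (\<lambda>i. \<lfloor>v$i\<rfloor>)" by (simp add: vec_eq_iff)
    moreover have "\<bar>v$i\<bar> \<le> R" for i
      using v R component_le_norm_cart order_trans by blast
    then have "-N \<le> \<lfloor>v$i\<rfloor> \<and> \<lfloor>v$i\<rfloor> \<le> N" for i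
      unfolding N_def
      by (metis abs_le_D1 abs_le_D2 ceiling_correct floor_le_ceiling floor_mono le_floor_iff
          of_int_minus minus_le_iff order_trans)
    then have "(\<lambda>i. \<lfloor>v$i\<rfloor>) \<in> UNIV \<rightarrow>\<^sub>E {-N..N}" by auto
    ultimately show "v \<in> ?vec ` (UNIV \<rightarrow>\<^sub>E {-N..N})" by (rule image_eqI)
  qed
  moreover have "finite (UNIV \<rightarrow>\<^sub>E {-N..N} :: ('a \<Rightarrow> int) set)"
    by (rule finite_PiE) auto
  ultimately show ?thesis by (meson finite_imageI finite_subset)
qed

lemma Ints_eq_0_or_1: "(m::real) \<in> \<int> \<Longrightarrow> 0 \<le> m \<Longrightarrow> m < 2 \<Longrightarrow> m = 0 \<or> m = 1"
  by (elim Ints_cases) auto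

section \<open>Polarized hyperbolic lattices\<close>

text \<open>Flipping the sign of the form on the orthogonal complement of \<open>h\<close>, where it is negative
  definite, gives the positive definite majorant below; it makes the level sets of
  \<open>(v\<^sup>2, v \<cdot> h)\<close> bounded, hence finite on the lattice.\<close>
definition majorant :: "int^'n^'n \<Rightarrow> real^'n \<Rightarrow> real^'n \<Rightarrow> real" where
  "majorant G h v = 2 * (bil G v h)\<^sup>2 / sq G h - sq G v"

lemma majorant_scale: "majorant G h (c *\<^sub>R v) = c\<^sup>2 * majorant G h v"
  by (simp add: majorant_def sq_scale bil_scale_left power_mult_distrib right_diff_distrib)

lemma continuous_on_bil:
  "continuous_on S f \<Longrightarrow> continuous_on S g \<Longrightarrow> continuous_on S (\<lambda>v. bil G (f v) (g v))"
  unfolding bil_def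
  by (intro continuous_on_sum continuous_on_mult continuous_on_const continuous_on_component)

lemma continuous_on_majorant: "continuous_on S (majorant G h)"
proof -
  have "majorant G h = (\<lambda>v. 2 / sq G h * (bil G v h)\<^sup>2 - bil G v v)"
    by (auto simp: majorant_def sq_def)
  then show ?thesis
    by (simp only:) (intro continuous_on_diff continuous_on_mult continuous_on_const
        continuous_on_power continuous_on_bil continuous_on_id)
qed

locale polarized_lattice =
  fixes G :: "int^'n^'n" and h :: "real^'n"
  assumes polarized: "polarized G h"
begin

lemma even: "even_lattice G"
  using polarized by (simp add: polarized_def)

lemma h_lat: "h \<in> lat"
  using polarized by (simp add: polarized_def)

lemma sq_h_pos: "0 < sq G h"
  using polarized by (simp add: polarized_def)

lemma bil_sym: "bil G x y = bil G y x"
  using bil_commute[OF even] .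

lemma sq_neg_if_orthogonal:
  assumes "bil G v h = 0" and "v \<noteq> 0"
  shows "sq G v < 0"
proof -
  have "hyperbolic G" using polarized by (simp add: polarized_def)
  moreover have "bil G h v = 0" using assms(1) bil_sym by simp
  ultimately show ?thesis using sq_h_pos assms(2) unfolding hyperbolic_def by blast
qed

lemma hodge_index: "sq G v * sq G h \<le> (bil G v h)\<^sup>2"
proof -
  define w where "w = v - (bil G v h / sq G h) *\<^sub>R h"
  have "bil G w h = 0"
    using sq_h_pos by (simp add: w_def bil_linear sq_def)
  then have "sq G w \<le> 0"
    by (cases "w = 0") (simp_all add: sq_neg_if_orthogonal less_imp_le)
  moreover have "sq G w = sq G v - (bil G v h)\<^sup>2 / sq G h"
    using sq_h_pos bil_sym[of h v]
    by (simp add: w_def sq_def bil_linear power2_eq_square field_simps)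
  ultimately show ?thesis
    using sq_h_pos by (simp add: field_simps)
qed

lemma majorant_pos:
  assumes "v \<noteq> 0"
  shows "0 < majorant G h v"
proof (cases "bil G v h = 0")
  case True
  then show ?thesis
    using sq_neg_if_orthogonal[OF True assms] by (simp add: majorant_def)
next
  case False
  have "sq G v \<le> (bil G v h)\<^sup>2 / sq G h"
    using hodge_index sq_h_pos by (simp add: le_divide_eq)
  moreover have "0 < (bil G v h)\<^sup>2 / sq G h"
    using False sq_h_pos by simp
  ultimately show ?thesis by (simp add: majorant_def)
qed

lemma majorant_coercive: "\<exists>m>0. \<forall>v. m * (norm v)\<^sup>2 \<le> majorant G h v"
proof -
  have "sphere (0::real^'n) 1 \<noteq> {}"
    using vector_choose_size[of 1] by auto
  then obtain x :: "real^'n" where x: "x \<in> sphere 0 1"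
    and x_min: "\<forall>y\<in>sphere 0 1. majorant G h x \<le> majorant G h y"
    using continuous_attains_inf[OF compact_sphere _ continuous_on_majorant] by blast
  have bound: "majorant G h x * (norm v)\<^sup>2 \<le> majorant G h v" for v
  proof (cases "v = 0")
    case False
    have "majorant G h x \<le> majorant G h ((1 / norm v) *\<^sub>R v)"
      using x_min False by simp
    also have "\<dots> = majorant G h v / (norm v)\<^sup>2"
      by (simp add: majorant_scale power_one_over)
    finally show ?thesis
      using False by (simp add: field_simps)
  qed (simp add: majorant_def sq_def)
  have "x \<noteq> 0"
    using x by auto
  then have "0 < majorant G h x"
    by (rule majorant_pos)
  then show ?thesis
    using bound by (intro exI[of _ "majorant G h x"] conjI allI)
qed

lemma finite_lat_level_set: "finite {v \<in> lat. sq G v = c \<and> bil G v h = b}"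
proof -
  obtain m where m: "0 < m" "\<And>v. m * (norm v)\<^sup>2 \<le> majorant G h v"
    using majorant_coercive by blast
  have "bounded {v. sq G v = c \<and> bil G v h = b}"
    unfolding bounded_iff
  proof (intro exI ballI)
    fix v assume v: "v \<in> {v. sq G v = c \<and> bil G v h = b}"
    then have "m * (norm v)\<^sup>2 \<le> 2 * b\<^sup>2 / sq G h - c"
      using v m(2)[of v] by (simp add: majorant_def)
    then have "(norm v)\<^sup>2 \<le> (2 * b\<^sup>2 / sq G h - c) / m"
      using m(1) by (simp add: le_divide_eq mult.commute)
    then show "norm v \<le> sqrt ((2 * b\<^sup>2 / sq G h - c) / m)"
      by (simp add: real_le_rsqrt)
  qed
  then have "finite (lat \<inter> {v. sq G v = c \<and> bil G v h = b})"
    by (rule finite_lat_bounded)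
  then show ?thesis
    by (simp add: Int_def)
qed

lemma finite_roots: "finite (roots G h n)"
  using finite_lat_level_set[of "-2" "of_int n"] by (simp add: roots_def)

lemma finite_pos_roots: "finite (pos_roots G h \<xi>)"
  by (rule finite_subset[OF _ finite_roots[of 0]]) (auto simp: pos_roots_def)

lemma nonneg_pos_roots_if_nonneg_simple_roots:
  assumes simple: "\<forall>s\<in>simple_roots G h \<xi>. 0 \<le> bil G v s" and "r \<in> pos_roots G h \<xi>"
  shows "0 \<le> bil G v r"
  using assms(2)
proof (induction "card {p \<in> pos_roots G h \<xi>. bil G p \<xi> < bil G r \<xi>}" arbitrary: r
    rule: less_induct)
  case less
  show ?case
  proof (cases "r \<in> simple_roots G h \<xi>")
    case True
    then show ?thesis using simple by blast
  next
    case False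
    then obtain p q where p: "p \<in> pos_roots G h \<xi>" and q: "q \<in> pos_roots G h \<xi>" and r: "r = p + q"
      using less.prems by (auto simp: simple_roots_def)
    have lower: "0 \<le> bil G v u" if u: "u \<in> pos_roots G h \<xi>" "bil G u \<xi> < bil G r \<xi>" for u
    proof (rule less.hyps[OF _ u(1)])
      have "{p \<in> pos_roots G h \<xi>. bil G p \<xi> < bil G u \<xi>}
          \<subset> {p \<in> pos_roots G h \<xi>. bil G p \<xi> < bil G r \<xi>}"
        using u by auto
      then show "card {p \<in> pos_roots G h \<xi>. bil G p \<xi> < bil G u \<xi>}
          < card {p \<in> pos_roots G h \<xi>. bil G p \<xi> < bil G r \<xi>}"
        using finite_pos_roots by (intro psubset_card_mono) auto
    qed
    have "0 < bil G p \<xi>" "0 < bil G q \<xi>"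
      using p q by (auto simp: pos_roots_def)
    then have "0 \<le> bil G v p" "0 \<le> bil G v q"
      using lower[OF p] lower[OF q] by (auto simp: r bil_add_left)
    then show ?thesis
      by (simp add: r bil_add_right)
  qed
qed

end

section \<open>Weyl chambers, lines and stars\<close>

locale weyl_chamber = polarized_lattice +
  fixes \<xi> :: "real^'n"
  assumes weyl_vector: "weyl_vector G h \<xi>"
begin

lemma root_pos_or_neg:
  assumes "r \<in> roots G h 0"
  shows "r \<in> pos_roots G h \<xi> \<or> - r \<in> pos_roots G h \<xi>"
proof -
  have "- r \<in> roots G h 0"
    using assms by (auto simp: roots_def lat_def sq_minus bil_minus_left)
  moreover have "bil G r \<xi> \<noteq> 0"
    using assms weyl_vector by (auto simp: weyl_vector_def)
  ultimately show ?thesis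
    using assms by (auto simp: pos_roots_def bil_minus_left)
qed

lemma root_no_sign_change:
  assumes "r \<in> roots G h 0"
    and "\<forall>p\<in>pos_roots G h \<xi>. 0 \<le> bil G v p" "\<forall>p\<in>pos_roots G h \<xi>. 0 \<le> bil G w p"
    and "bil G v r < 0"
  shows "bil G w r \<le> 0"
  using root_pos_or_neg[OF assms(1)] assms(2-4) by (force simp: bil_minus_right)

lemma fanoD:
  assumes "l \<in> fano G h \<xi>"
  shows "l \<in> lat" "sq G l = -2" "bil G l h = 1"
  using assms by (auto simp: fano_def roots_def)

lemma fano_nonneg_pos_roots: "l \<in> fano G h \<xi> \<Longrightarrow> \<forall>p\<in>pos_roots G h \<xi>. 0 \<le> bil G l p"
  using nonneg_pos_roots_if_nonneg_simple_roots by (auto simp: fano_def)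

lemma fano_bil_nonneg:
  assumes l1: "l1 \<in> fano G h \<xi>" and l2: "l2 \<in> fano G h \<xi>" and "l1 \<noteq> l2"
  shows "0 \<le> bil G l1 l2"
proof (rule ccontr)
  assume neg: "\<not> 0 \<le> bil G l1 l2"
  note f1 = fanoD[OF l1] and f2 = fanoD[OF l2]
  have "bil G (l1 - l2) h = 0" "l1 - l2 \<noteq> 0"
    using f1 f2 \<open>l1 \<noteq> l2\<close> by (simp_all add: bil_diff_left)
  then have "sq G (l1 - l2) < 0"
    by (rule sq_neg_if_orthogonal)
  moreover have "sq G (l1 - l2) = -4 - 2 * bil G l1 l2"
    using f1 f2 bil_sym[of l2 l1] by (simp add: sq_def bil_diff_left bil_diff_right)
  moreover have "bil G l1 l2 \<in> \<int>"
    using f1 f2 by (simp add: bil_Ints)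
  ultimately have "- bil G l1 l2 = 0 \<or> - bil G l1 l2 = 1"
    using neg by (intro Ints_eq_0_or_1) auto
  with neg have m: "bil G l1 l2 = -1"
    by auto
  have "l1 - l2 \<in> roots G h 0"
    using f1 f2 m bil_sym[of l2 l1]
    by (auto simp: roots_def lat_def sq_def bil_diff_left bil_diff_right)
  moreover have "bil G l1 (l1 - l2) < 0" "0 < bil G l2 (l1 - l2)"
    using f1 f2 m bil_sym[of l2 l1] by (simp_all add: sq_def bil_diff_right)
  ultimately show False
    using root_no_sign_change[OF _ fano_nonneg_pos_roots[OF l1] fano_nonneg_pos_roots[OF l2]]
    by fastforce
qed

lemma finite_star: "finite (star G h \<xi> e)"
  by (rule finite_subset[OF _ finite_roots[of 1]]) (auto simp: star_def fano_def)

lemma starD: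
  assumes "l \<in> star G h \<xi> e"
  shows "l \<in> fano G h \<xi>" "l \<in> lat" "sq G l = -2" "bil G l h = 1" "bil G l e = 1"
  using assms fanoD by (auto simp: star_def)

lemma star_bil_Ints: "l1 \<in> star G h \<xi> e \<Longrightarrow> l2 \<in> star G h \<xi> e \<Longrightarrow> bil G l1 l2 \<in> \<int>"
  by (simp add: starD bil_Ints)

lemma sum_star_bil:
  assumes "C \<subseteq> star G h \<xi> e"
  shows "bil G (\<Sum>C) h = card C" "bil G (\<Sum>C) e = card C"
proof -
  have "bil G l h = 1 \<and> bil G l e = 1" if "l \<in> C" for l
    using assms that starD by blast
  then show "bil G (\<Sum>C) h = card C" "bil G (\<Sum>C) e = card C"
    by (simp_all add: bil_sum_left)
qed

lemma star_combination:
  assumes "C \<subseteq> star G h \<xi> e"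
  shows "bil G (a *\<^sub>R h + t *\<^sub>R e + \<Sum>C) h = a * sq G h + t * bil G e h + card C"
    and "sq G (a *\<^sub>R h + t *\<^sub>R e + \<Sum>C) = a\<^sup>2 * sq G h + t\<^sup>2 * sq G e + sq G (\<Sum>C)
          + 2 * a * t * bil G e h + 2 * a * card C + 2 * t * card C"
  using sum_star_bil[OF assms] bil_sym[of h e] bil_sym[of h "\<Sum>C"] bil_sym[of e "\<Sum>C"]
  by (simp_all add: sq_add[OF even] sq_scale bil_linear sq_def algebra_simps power2_eq_square)

lemma star_combination_lat:
  "a \<in> \<int> \<Longrightarrow> t \<in> \<int> \<Longrightarrow> e \<in> lat \<Longrightarrow> C \<subseteq> star G h \<xi> e \<Longrightarrow> a *\<^sub>R h + t *\<^sub>R e + \<Sum>C \<in> lat"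
  using h_lat starD(2) by (intro lat_add lat_scale lat_sum) auto

lemma star_hodge_index:
  assumes "C \<subseteq> star G h \<xi> e"
  shows "sq G h * (t\<^sup>2 * sq G e + sq G (\<Sum>C) + 2 * t * card C) \<le> (t * bil G e h + card C)\<^sup>2"
  using hodge_index[of "0 *\<^sub>R h + t *\<^sub>R e + \<Sum>C"] star_combination[OF assms, of 0 t]
  by (simp add: mult.commute)

lemma sq_sum_star_orthogonal:
  assumes "C \<subseteq> star G h \<xi> e" and "\<forall>x\<in>C. \<forall>y\<in>C. x \<noteq> y \<longrightarrow> bil G x y = 0"
  shows "sq G (\<Sum>C) = -2 * card C"
proof (cases "finite C")
  case True
  then have "sq G (\<Sum>C) = (\<Sum>x\<in>C. sq G x)"
    using sq_sum_orthogonal[OF even] assms(2) by blast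
  also have "\<dots> = (\<Sum>x\<in>C. -2)"
    using assms(1) starD(3) by (intro sum.cong) auto
  finally show ?thesis
    by simp
qed simp

lemma sq_add_star:
  assumes "l1 \<in> star G h \<xi> e" "l2 \<in> star G h \<xi> e"
  shows "sq G (l1 + l2) = 2 * bil G l1 l2 - 4"
  using assms starD(3) by (simp add: sq_add[OF even])

lemma star_bil_0_or_1:
  assumes l1: "l1 \<in> star G h \<xi> e" and l2: "l2 \<in> star G h \<xi> e" and "l1 \<noteq> l2"
    and e: "(bil G e h + 2)\<^sup>2 < sq G h * (sq G e + 4)"
  shows "bil G l1 l2 = 0 \<or> bil G l1 l2 = 1"
proof (rule Ints_eq_0_or_1)
  have "sq G h * (sq G e + 2 * bil G l1 l2) \<le> (bil G e h + 2)\<^sup>2"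
    using star_hodge_index[of "{l1, l2}" e 1] assms(1-3)
    by (simp add: sq_add_star[OF l1 l2] algebra_simps)
  with e have "sq G h * (2 * bil G l1 l2) < sq G h * 4"
    by (simp add: algebra_simps)
  then show "bil G l1 l2 < 2"
    using sq_h_pos by (simp add: mult_less_cancel_left_pos)
  show "bil G l1 l2 \<in> \<int>" "0 \<le> bil G l1 l2"
    using assms(1-3) star_bil_Ints fano_bil_nonneg starD(1) by auto
qed

end

section \<open>Stars in degree 8\<close>

lemma card_le_if_no_subset_card_Suc:
  assumes "\<And>B. B \<subseteq> A \<Longrightarrow> card B = Suc n \<Longrightarrow> False"
  shows "card A \<le> n"
proof (rule ccontr)
  assume "\<not> card A \<le> n"
  then obtain B where "B \<subseteq> A" "card B = Suc n"
    using obtain_subset_with_card_n[of "Suc n" A] by auto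
  with assms show False .
qed

lemma graph_iso_aA1:
  assumes "finite V" and "\<forall>x\<in>V. \<forall>y\<in>V. x \<noteq> y \<longrightarrow> w x y = 0"
  shows "graph_iso V w {0..<card V} aA1_mult"
  using ex_bij_betw_finite_nat[OF assms(1)] assms(2) unfolding graph_iso_def aA1_mult_def by blast

lemma graph_iso_A2aA1:
  assumes "finite V" and "l1 \<in> V" "l2 \<in> V" "l1 \<noteq> l2"
    and "\<forall>x\<in>V. \<forall>y\<in>V. x \<noteq> y \<longrightarrow> w x y = (if {x, y} = {l1, l2} then 1 else 0)"
  shows "graph_iso V w {0..<card V} A2aA1_mult"
proof -
  obtain xs where xs: "set xs = V - {l1, l2}" "distinct xs"
    using finite_distinct_list assms(1) by (meson finite_Diff)
  define ys where "ys = l1 # l2 # xs"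
  have "distinct ys" "set ys = V"
    using xs assms(2-4) by (auto simp: ys_def)
  then have nth_bij: "bij_betw ((!) ys) {0..<card V} V"
    by (intro bij_betw_nth) (auto simp: distinct_card[symmetric])
  define f where "f = inv_into {0..<card V} ((!) ys)"
  have nth_inj: "inj_on ((!) ys) {0..<card V}"
    using nth_bij by (rule bij_betw_imp_inj_on)
  have f_bij: "bij_betw f V {0..<card V}"
    unfolding f_def using nth_bij by (rule bij_betw_inv_into)
  have "2 \<le> card V"
    using card_mono[OF assms(1), of "{l1, l2}"] assms(2-4) by simp
  then have "f l1 = 0" "f l2 = 1"
    using inv_into_f_f[OF nth_inj, of 0] inv_into_f_f[OF nth_inj, of 1] by (auto simp: f_def ys_def)
  then have "{x, y} = {l1, l2} \<longleftrightarrow> {f x, f y} = {0, 1}" if "x \<in> V" "y \<in> V" for x y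
    using inj_on_image_eq_iff[of f V "{x, y}" "{l1, l2}"] f_bij that assms(2,3)
    by (auto simp: f_def bij_betw_def)
  then show ?thesis
    unfolding graph_iso_def A2aA1_mult_def using f_bij assms(5) by (auto simp: f_def)
qed

locale degree8_chamber = weyl_chamber +
  assumes degree: "sq G h = 8" and admissible: "admissible2 G h"
begin

lemma no_isotropic_2:
  assumes "w \<in> lat" "sq G w = 0" "\<bar>bil G w h\<bar> = 2"
  shows False
proof -
  have "isotropic G h 2 w \<or> isotropic G h 2 (- w)"
  proof (cases "0 \<le> bil G w h")
    case True
    then show ?thesis
      using assms by (simp add: isotropic_def)
  next
    case False
    moreover have "- w \<in> lat"
      using assms(1) lat_scale[of "-1" w] by simp
    ultimately show ?thesis
      using assms by (simp add: isotropic_def sq_minus bil_minus_left)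
  qed
  with admissible show False
    by (auto simp: admissible2_def)
qed

lemma star_iso_aA1_if_orthogonal:
  assumes "\<forall>x\<in>star G h \<xi> e. \<forall>y\<in>star G h \<xi> e. x \<noteq> y \<longrightarrow> bil G x y = 0"
    and "card (star G h \<xi> e) \<le> n"
  shows "\<exists>a\<le>n. star_iso_aA1 G h \<xi> e a"
  using graph_iso_aA1[OF finite_star assms(1)] assms(2) unfolding star_iso_aA1_def by blast

text \<open>The hypothesis on \<open>t\<close> says that \<open>t e + \<Sum>B\<close>, for \<open>n + 1\<close> disjoint lines \<open>B\<close> of the star,
  would violate the Hodge index theorem.\<close>
lemma orthogonal_star_card_le:
  assumes orthogonal: "\<forall>x\<in>star G h \<xi> e. \<forall>y\<in>star G h \<xi> e. x \<noteq> y \<longrightarrow> bil G x y = 0"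
    and t: "(t * bil G e h + Suc n)\<^sup>2 < 8 * (t\<^sup>2 * sq G e + 2 * (t - 1) * Suc n)"
  shows "card (star G h \<xi> e) \<le> n"
proof (rule card_le_if_no_subset_card_Suc)
  fix B assume B: "B \<subseteq> star G h \<xi> e" "card B = Suc n"
  have "\<forall>x\<in>B. \<forall>y\<in>B. x \<noteq> y \<longrightarrow> bil G x y = 0"
    using orthogonal B(1) by blast
  then have "sq G (\<Sum>B) = -2 * Suc n"
    using sq_sum_star_orthogonal[OF B(1)] B(2) by simp
  then have "8 * (t\<^sup>2 * sq G e + 2 * (t - 1) * Suc n) \<le> (t * bil G e h + Suc n)\<^sup>2"
    using star_hodge_index[OF B(1), of t] B(2) by (simp add: degree algebra_simps)
  with t show False
    by simp
qed

lemma line_star_bil_0_or_1: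
  assumes "e \<in> fano G h \<xi>" "l1 \<in> star G h \<xi> e" "l2 \<in> star G h \<xi> e" "l1 \<noteq> l2"
  shows "bil G l1 l2 = 0 \<or> bil G l1 l2 = 1"
  using star_bil_0_or_1[OF assms(2-4)] fanoD[OF assms(1)] by (simp add: degree)

lemma line_star_triple:
  assumes e: "e \<in> fano G h \<xi>"
    and l: "l1 \<in> star G h \<xi> e" "l2 \<in> star G h \<xi> e" "l3 \<in> star G h \<xi> e"
    and "l1 \<noteq> l2" "l1 \<noteq> l3" "l2 \<noteq> l3"
  shows "bil G l1 l2 + bil G l1 l3 + bil G l2 l3 \<le> 1"
proof -
  let ?M = "bil G l1 l2 + bil G l1 l3 + bil G l2 l3"
  have "sq G (l1 + (l2 + l3)) = 2 * ?M - 6"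
    using l starD(3) by (simp add: sq_add[OF even] bil_add_right)
  then have "8 * ((5/4)\<^sup>2 * (-2) + (2 * ?M - 6) + 2 * (5/4) * 3) \<le> (5/4 * 1 + 3)\<^sup>2"
    using star_hodge_index[of "{l1, l2, l3}" e "5/4"] l assms(5-7) fanoD[OF e]
    by (simp add: degree add.assoc)
  then have "?M < 2"
    by (simp add: power2_eq_square)
  moreover have "?M \<in> \<int>"
    using l star_bil_Ints by (intro Ints_add) auto
  moreover have "0 \<le> ?M"
    using l assms(5-7) fano_bil_nonneg starD(1) by (meson add_nonneg_nonneg)
  ultimately show ?thesis
    using Ints_eq_0_or_1 by fastforce
qed

lemma line_star_off_edge:
  assumes e: "e \<in> fano G h \<xi>"
    and l: "l1 \<in> star G h \<xi> e" "l2 \<in> star G h \<xi> e" "l1 \<noteq> l2" "bil G l1 l2 = 1"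
    and z: "z \<in> star G h \<xi> e" "z \<notin> {l1, l2}"
  shows "bil G z l1 = 0" "bil G z l2 = 0"
proof -
  have "0 \<le> bil G l1 z" "0 \<le> bil G l2 z"
    using z l fano_bil_nonneg starD(1) by auto
  moreover have "bil G l1 l2 + bil G l1 z + bil G l2 z \<le> 1"
    using line_star_triple[OF e l(1,2) z(1) l(3)] z(2) by auto
  ultimately show "bil G z l1 = 0" "bil G z l2 = 0"
    using l(4) bil_sym[of z l1] bil_sym[of z l2] by linarith+
qed

lemma line_star_edge_unique:
  assumes e: "e \<in> fano G h \<xi>"
    and l: "l1 \<in> star G h \<xi> e" "l2 \<in> star G h \<xi> e" "l1 \<noteq> l2" "bil G l1 l2 = 1"
    and xy: "x \<in> star G h \<xi> e" "y \<in> star G h \<xi> e" "x \<noteq> y" "bil G x y = 1"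
  shows "{x, y} = {l1, l2}"
proof (rule ccontr)
  assume "{x, y} \<noteq> {l1, l2}"
  then consider "x \<in> {l1, l2}" "y \<notin> {l1, l2}" | "y \<in> {l1, l2}" "x \<notin> {l1, l2}"
    | "x \<notin> {l1, l2}" "y \<notin> {l1, l2}"
    using xy(3) by blast
  then show False
  proof cases
    case 1
    then show False
      using line_star_off_edge[OF e l xy(2)] xy(4) bil_sym[of x y] by auto
  next
    case 2
    then show False
      using line_star_off_edge[OF e l xy(1)] xy(4) by auto
  next
    case 3
    let ?C = "{l1, l2} \<union> {x, y}"
    let ?v = "(-1) *\<^sub>R h + 2 *\<^sub>R e + \<Sum>?C"
    have disjoint: "{l1, l2} \<inter> {x, y} = {}"
      using 3 by auto
    have "\<forall>a\<in>{l1, l2}. \<forall>b\<in>{x, y}. bil G a b = 0"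
      using line_star_off_edge[OF e l xy(1) 3(1)] line_star_off_edge[OF e l xy(2) 3(2)]
        bil_sym[of l1 x] bil_sym[of l1 y] bil_sym[of l2 x] bil_sym[of l2 y] by auto
    then have "sq G (\<Sum>?C) = sq G (\<Sum>{l1, l2}) + sq G (\<Sum>{x, y})"
      by (intro sq_sum_union_orthogonal[OF even _ _ disjoint]) auto
    then have "sq G (\<Sum>?C) = -4"
      using l xy by (simp add: sq_add_star)
    moreover have C: "?C \<subseteq> star G h \<xi> e" "card ?C = 4"
      using l xy disjoint by (auto simp: card_Un_disjoint)
    ultimately have "sq G ?v = 0" and "\<bar>bil G ?v h\<bar> = 2"
      using star_combination[OF C(1), of "-1" 2] fanoD[OF e] by (simp_all add: degree)
    moreover have "?v \<in> lat"
      by (rule star_combination_lat) (use fanoD(1)[OF e] C(1) in auto)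
    ultimately show False
      using no_isotropic_2 by blast
  qed
qed

lemma line_star_edge_weights:
  assumes e: "e \<in> fano G h \<xi>"
    and l: "l1 \<in> star G h \<xi> e" "l2 \<in> star G h \<xi> e" "l1 \<noteq> l2" "bil G l1 l2 = 1"
    and xy: "x \<in> star G h \<xi> e" "y \<in> star G h \<xi> e" "x \<noteq> y"
  shows "bil G x y = (if {x, y} = {l1, l2} then 1 else 0)"
proof (cases "{x, y} = {l1, l2}")
  case True
  then show ?thesis
    using l(4) bil_sym[of l2 l1] by (auto simp: doubleton_eq_iff)
next
  case False
  then show ?thesis
    using line_star_bil_0_or_1[OF e xy] line_star_edge_unique[OF e l xy] by auto
qed

lemma line_star_edge_and_4_orthogonal:
  assumes e: "e \<in> fano G h \<xi>"
    and l: "l1 \<in> star G h \<xi> e" "l2 \<in> star G h \<xi> e" "l1 \<noteq> l2" "bil G l1 l2 = 1"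
    and B: "B \<subseteq> star G h \<xi> e - {l1, l2}" "card B = 4"
    and B_orthogonal: "\<forall>x\<in>B. \<forall>y\<in>{l1, l2} \<union> B. x \<noteq> y \<longrightarrow> bil G x y = 0"
  shows False
proof -
  let ?C = "{l1, l2} \<union> B"
  let ?r = "(-1) *\<^sub>R h + 2 *\<^sub>R e + \<Sum>?C"
  have B_star: "B \<subseteq> star G h \<xi> e" and disjoint: "{l1, l2} \<inter> B = {}"
    using B(1) by auto
  have fin: "finite B"
    using B(2) by (intro card_ge_0_finite) simp
  have C: "?C \<subseteq> star G h \<xi> e" "card ?C = 6"
    using l B_star B(2) fin disjoint by (auto simp: card_Un_disjoint)
  have "\<forall>a\<in>{l1, l2}. \<forall>b\<in>B. bil G a b = 0"
    using B_orthogonal disjoint bil_sym[of l1] bil_sym[of l2] by fastforce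
  then have "sq G (\<Sum>?C) = sq G (\<Sum>{l1, l2}) + sq G (\<Sum>B)"
    by (intro sq_sum_union_orthogonal[OF even _ fin disjoint]) simp
  moreover have "sq G (\<Sum>B) = -8"
    using sq_sum_star_orthogonal[OF B_star] B_orthogonal B(2) by simp
  moreover have "sq G (\<Sum>{l1, l2}) = -2"
    using l by (simp add: sq_add_star)
  ultimately have "sq G ?r = -2" and "bil G ?r h = 0"
    using star_combination[OF C(1), of "-1" 2] fanoD[OF e] C(2) by (simp_all add: degree)
  moreover have "?r \<in> lat"
    by (rule star_combination_lat) (use fanoD(1)[OF e] C(1) in auto)
  ultimately have root: "?r \<in> roots G h 0"
    by (simp add: roots_def)
  obtain l3 where l3: "l3 \<in> B"
    using B(2) by (metis card.empty ex_in_conv zero_neq_numeral)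
  then have l3_line: "l3 \<in> star G h \<xi> e"
    using B_star by blast
  have "bil G l3 (\<Sum>?C) = -2"
    using bil_sum_orthogonal_member[of ?C l3] fin l3 B_orthogonal starD(3)[OF l3_line] by auto
  then have "bil G l3 ?r < 0"
    using starD[OF l3_line] by (simp add: bil_linear sq_def)
  then have "bil G e ?r \<le> 0"
    using root_no_sign_change[OF root fano_nonneg_pos_roots[OF starD(1)[OF l3_line]]
        fano_nonneg_pos_roots[OF e]] by blast
  moreover have "0 < bil G e ?r"
    using sum_star_bil[OF C(1)] fanoD[OF e] C(2) bil_sym[of e h] bil_sym[of e "\<Sum>?C"]
    by (simp add: bil_linear sq_def)
  ultimately show False
    by simp
qed

lemma star_line:
  assumes e: "e \<in> fano G h \<xi>"
  shows "(\<exists>a\<le>3. star_iso_A2aA1 G h \<xi> e a) \<or> (\<exists>a\<le>8. star_iso_aA1 G h \<xi> e a)"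
proof (cases "\<exists>l1\<in>star G h \<xi> e. \<exists>l2\<in>star G h \<xi> e. l1 \<noteq> l2 \<and> bil G l1 l2 = 1")
  case False
  then have orthogonal: "\<forall>x\<in>star G h \<xi> e. \<forall>y\<in>star G h \<xi> e. x \<noteq> y \<longrightarrow> bil G x y = 0"
    using line_star_bil_0_or_1[OF e] by blast
  moreover have "card (star G h \<xi> e) \<le> 8"
    using orthogonal_star_card_le[OF orthogonal, of 4] fanoD[OF e] by simp
  ultimately show ?thesis
    using star_iso_aA1_if_orthogonal by blast
next
  case True
  then obtain l1 l2 where l: "l1 \<in> star G h \<xi> e" "l2 \<in> star G h \<xi> e" "l1 \<noteq> l2" "bil G l1 l2 = 1"
    by blast
  let ?S = "star G h \<xi> e"
  have edge: "\<forall>x\<in>?S. \<forall>y\<in>?S. x \<noteq> y \<longrightarrow> bil G x y = (if {x, y} = {l1, l2} then 1 else 0)"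
    using line_star_edge_weights[OF e l] by blast
  have "card (?S - {l1, l2}) \<le> 3"
  proof (rule card_le_if_no_subset_card_Suc)
    fix B assume B: "B \<subseteq> ?S - {l1, l2}" "card B = Suc 3"
    moreover have "\<forall>x\<in>B. \<forall>y\<in>{l1, l2} \<union> B. x \<noteq> y \<longrightarrow> bil G x y = 0"
    proof (intro ballI impI)
      fix x y assume xy: "x \<in> B" "y \<in> {l1, l2} \<union> B" "x \<noteq> y"
      then have "{x, y} \<noteq> {l1, l2}" "x \<in> ?S" "y \<in> ?S"
        using B(1) l(1,2) by (auto simp: doubleton_eq_iff)
      then show "bil G x y = 0"
        using line_star_edge_weights[OF e l _ _ xy(3)] by simp
    qed
    ultimately show False
      using line_star_edge_and_4_orthogonal[OF e l] by simp
  qed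
  moreover have "card {l1, l2} \<le> card ?S"
    by (rule card_mono[OF finite_star]) (use l in auto)
  then have "card ?S = card (?S - {l1, l2}) + 2"
    using l by (simp add: card_Diff_subset)
  moreover have "graph_iso ?S (bil G) {0..<card ?S} A2aA1_mult"
    by (rule graph_iso_A2aA1[OF finite_star l(1-3) edge])
  ultimately have "star_iso_A2aA1 G h \<xi> e (card (?S - {l1, l2}))"
    unfolding star_iso_A2aA1_def by simp
  with \<open>card (?S - {l1, l2}) \<le> 3\<close> show ?thesis
    by blast
qed

lemma star_line_admissible3:
  assumes admissible3: "admissible3 G h" and e: "e \<in> fano G h \<xi>"
  shows "\<exists>a\<le>7. star_iso_aA1 G h \<xi> e a"
proof -
  have no_isotropic_3: "w \<in> lat \<Longrightarrow> sq G w = 0 \<Longrightarrow> bil G w h \<noteq> 3" for w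
    using admissible3 by (auto simp: admissible3_def isotropic_def)
  have orthogonal: "\<forall>x\<in>star G h \<xi> e. \<forall>y\<in>star G h \<xi> e. x \<noteq> y \<longrightarrow> bil G x y = 0"
  proof (intro ballI impI)
    fix x y assume xy: "x \<in> star G h \<xi> e" "y \<in> star G h \<xi> e" "x \<noteq> y"
    have "e + (x + y) \<in> lat"
      using star_combination_lat[of 0 1 e "{x, y}"] fanoD(1)[OF e] xy by simp
    moreover have "sq G (e + (x + y)) = 2 * bil G x y - 2" "bil G (e + (x + y)) h = 3"
      using star_combination[of "{x, y}" e 0 1] xy fanoD[OF e] by (simp_all add: sq_add_star)
    ultimately have "bil G x y \<noteq> 1"
      using no_isotropic_3 by auto
    then show "bil G x y = 0"
      using line_star_bil_0_or_1[OF e xy] by blast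
  qed
  have "card (star G h \<xi> e) \<le> 7"
  proof (rule card_le_if_no_subset_card_Suc)
    fix B assume B: "B \<subseteq> star G h \<xi> e" "card B = Suc 7"
    let ?v = "(-1) *\<^sub>R h + 3 *\<^sub>R e + \<Sum>B"
    have "\<forall>x\<in>B. \<forall>y\<in>B. x \<noteq> y \<longrightarrow> bil G x y = 0"
      using orthogonal B(1) by blast
    then have "sq G (\<Sum>B) = -16"
      using sq_sum_star_orthogonal[OF B(1)] B(2) by simp
    then have "sq G ?v = 0" "bil G ?v h = 3"
      using star_combination[OF B(1), of "-1" 3] fanoD[OF e] B(2) by (simp_all add: degree)
    moreover have "?v \<in> lat"
      by (rule star_combination_lat) (use fanoD(1)[OF e] B(1) in auto)
    ultimately show False
      using no_isotropic_3 by blast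
  qed
  with orthogonal show ?thesis
    by (rule star_iso_aA1_if_orthogonal)
qed

lemma star_exceptional:
  assumes e: "e \<in> simple_roots G h \<xi>"
  shows "\<exists>a\<le>5. star_iso_aA1 G h \<xi> e a"
proof -
  have e_root: "e \<in> lat" "sq G e = -2" "bil G e h = 0"
    using e by (auto simp: simple_roots_def pos_roots_def roots_def)
  have orthogonal: "\<forall>x\<in>star G h \<xi> e. \<forall>y\<in>star G h \<xi> e. x \<noteq> y \<longrightarrow> bil G x y = 0"
  proof (intro ballI impI)
    fix x y assume xy: "x \<in> star G h \<xi> e" "y \<in> star G h \<xi> e" "x \<noteq> y"
    have "e + (x + y) \<in> lat"
      using star_combination_lat[of 0 1 e "{x, y}"] e_root xy by simp
    moreover have "sq G (e + (x + y)) = 2 * bil G x y - 2" "bil G (e + (x + y)) h = 2"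
      using star_combination[of "{x, y}" e 0 1] xy e_root by (simp_all add: sq_add_star)
    ultimately have "bil G x y \<noteq> 1"
      using no_isotropic_2[of "e + (x + y)"] by auto
    moreover have "bil G x y = 0 \<or> bil G x y = 1"
      using star_bil_0_or_1[OF xy] e_root by (simp add: degree)
    ultimately show "bil G x y = 0"
      by blast
  qed
  moreover have "card (star G h \<xi> e) \<le> 5"
    using orthogonal_star_card_le[OF orthogonal, of 3] e_root by simp
  ultimately show ?thesis
    by (rule star_iso_aA1_if_orthogonal)
qed

lemma isotropic3_star_edge:
  assumes iso: "isotropic G h 3 e" and "e \<in> Pbar G h \<xi>"
    and l: "l1 \<in> star G h \<xi> e" "l2 \<in> star G h \<xi> e" "l1 \<noteq> l2" "bil G l1 l2 = 1"
  shows "star G h \<xi> e = {l1, l2}"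
proof (rule ccontr)
  assume "star G h \<xi> e \<noteq> {l1, l2}"
  then obtain x where x: "x \<in> star G h \<xi> e" "x \<notin> {l1, l2}"
    using l by blast
  let ?r = "(-1) *\<^sub>R h + 2 *\<^sub>R e + \<Sum>{l1, l2}"
  have e_iso: "e \<in> lat" "sq G e = 0" "bil G e h = 3"
    using iso by (auto simp: isotropic_def)
  have "sq G ?r = -2" "bil G ?r h = 0"
    using star_combination[of "{l1, l2}" e "-1" 2] l e_iso by (simp_all add: sq_add_star degree)
  moreover have "?r \<in> lat"
    by (rule star_combination_lat) (use e_iso l in auto)
  ultimately have root: "?r \<in> roots G h 0"
    by (simp add: roots_def)
  have "bil G e l1 = 1" "bil G e l2 = 1"
    using l starD(5) bil_sym by metis+
  then have "bil G e ?r < 0"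
    using e_iso l(3) by (simp add: bil_linear sq_def)
  moreover have "\<forall>p\<in>pos_roots G h \<xi>. 0 \<le> bil G e p"
    using \<open>e \<in> Pbar G h \<xi>\<close> by (simp add: Pbar_def)
  ultimately have "bil G x ?r \<le> 0"
    using root_no_sign_change[OF root _ fano_nonneg_pos_roots[OF starD(1)[OF x(1)]]] by blast
  moreover have "0 \<le> bil G x l1" "0 \<le> bil G x l2"
    using x l fano_bil_nonneg starD(1) by auto
  ultimately show False
    using x starD[OF x(1)] l(3) by (simp add: bil_linear)
qed

lemma star_isotropic3:
  assumes iso: "isotropic G h 3 e" and "e \<in> Pbar G h \<xi>"
  shows "star_iso_A2aA1 G h \<xi> e 0 \<or> (\<exists>a\<le>9. star_iso_aA1 G h \<xi> e a)"
proof (cases "\<exists>l1\<in>star G h \<xi> e. \<exists>l2\<in>star G h \<xi> e. l1 \<noteq> l2 \<and> bil G l1 l2 = 1")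
  case False
  have e_iso: "sq G e = 0" "bil G e h = 3"
    using iso by (auto simp: isotropic_def)
  then have "bil G x y = 0 \<or> bil G x y = 1"
    if "x \<in> star G h \<xi> e" "y \<in> star G h \<xi> e" "x \<noteq> y" for x y
    using star_bil_0_or_1[OF that] by (simp add: degree)
  with False have orthogonal: "\<forall>x\<in>star G h \<xi> e. \<forall>y\<in>star G h \<xi> e. x \<noteq> y \<longrightarrow> bil G x y = 0"
    by blast
  moreover have "card (star G h \<xi> e) \<le> 9"
    using orthogonal_star_card_le[OF orthogonal, of 5] e_iso by simp
  ultimately show ?thesis
    using star_iso_aA1_if_orthogonal by blast
next
  case True
  then obtain l1 l2 where l: "l1 \<in> star G h \<xi> e" "l2 \<in> star G h \<xi> e" "l1 \<noteq> l2" "bil G l1 l2 = 1"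
    by blast
  have "\<forall>x\<in>{l1, l2}. \<forall>y\<in>{l1, l2}. x \<noteq> y \<longrightarrow> bil G x y = (if {x, y} = {l1, l2} then 1 else 0)"
    using l(4) bil_sym[of l2 l1] by (auto simp: insert_commute)
  then have "graph_iso {l1, l2} (bil G) {0..<card {l1, l2}} A2aA1_mult"
    by (intro graph_iso_A2aA1) (use l(3) in auto)
  then show ?thesis
    using isotropic3_star_edge[OF assms l] l(3) by (simp add: star_iso_A2aA1_def)
qed

end

theorem lemma5p1:
  fixes G :: "int^'n^'n" and h \<xi> :: "real^'n"
  assumes "polarized G h" and "sq G h = 8" and "admissible2 G h"
    and "weyl_vector G h \<xi>"
  shows "(\<forall>e\<in>fano G h \<xi>.
            (\<exists>a\<le>3. star_iso_A2aA1 G h \<xi> e a) \<or> (\<exists>a\<le>8. star_iso_aA1 G h \<xi> e a))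
       \<and> (admissible3 G h \<longrightarrow> (\<forall>e\<in>fano G h \<xi>. \<exists>a\<le>7. star_iso_aA1 G h \<xi> e a))
       \<and> (\<forall>e\<in>simple_roots G h \<xi>. \<exists>a\<le>5. star_iso_aA1 G h \<xi> e a)
       \<and> (\<forall>e. isotropic G h 3 e \<and> e \<in> Pbar G h \<xi> \<longrightarrow>
            star_iso_A2aA1 G h \<xi> e 0 \<or> (\<exists>a\<le>9. star_iso_aA1 G h \<xi> e a))"
proof -
  interpret degree8_chamber G h \<xi>
    using assms by unfold_locales
  show ?thesis
    by (intro conjI ballI allI impI star_line star_line_admissible3 star_exceptional
        star_isotropic3) auto
qed

end
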